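(* Fix an integer $N\ge2$. For $H\in[0,1)$ define $$F^1_H(N)=\sum_{k=2}^N\left((k+1)^{2H}+(k-1)^{2H}-2k^{2H}\right)^2+\left(2^{2H}-2\right)^2,$$ $$F^2_H(N)=\sum_{k=2}^N(N-k+1)\left|(k+1)^{2H}+(k-1)^{2H}-2k^{2H}\right|+N\left|2^{2H}-2\right|,$$ and $E^i_H(N)=-\frac{(H-1/2)^2}{1-H}F^i_H(N)$, $i=1,2$. Then both $E^1_H(N)$ and $E^2_H(N)$ increase in $H$ on $[0,\frac12]$, vanish at $H=\frac12$, and decrease in $H$ on $[\frac12,1)$. More precisely, $E^1_H(N)$ increases from $-\frac14$ (at $H=0$) to $0$ and then decreases from $0$ to $-\infty$ (as $H\uparrow1$), and $E^2_H(N)$ increases from $-\frac N4$ (at $H=0$) to $0$ and then decreases from $0$ to $-\infty$ (as $H\uparrow1$).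
   Context: These are "alternative entropy functionals" of fractional Gaussian noise: $(k+1)^{2H}+(k-1)^{2H}-2k^{2H}=2\rho_k(H)$, where $\rho_k(H)$ is the lag-$k$ autocovariance of fractional Gaussian noise with Hurst index $H$; $F^1$ is the sum $\sum_{k=1}^N(2\rho_k(H))^2$ and $F^2$ is $\sum_{k=1}^N(N-k+1)|2\rho_k(H)|$. In the formulas, $(k-1)^{2H}$ for $k\ge2$ and $H=0$ equals $1$. *)

theory Defs
  imports "HOL-Analysis.Analysis"
begin

text \<open>The second difference (k+1)^(2H) + (k-1)^(2H) - 2 k^(2H), for k \<ge> 2
  (all bases are \<ge> 1, so powr agrees with the usual power, including H = 0).\<close>
definition d2 :: "nat \<Rightarrow> real \<Rightarrow> real" where
  "d2 k H = (real k + 1) powr (2*H) + (real k - 1) powr (2*H) - 2 * (real k) powr (2*H)"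

definition F1 :: "nat \<Rightarrow> real \<Rightarrow> real" where
  "F1 N H = (\<Sum>k=2..N. (d2 k H)^2) + (2 powr (2*H) - 2)^2"

definition F2 :: "nat \<Rightarrow> real \<Rightarrow> real" where
  "F2 N H = (\<Sum>k=2..N. real (N - k + 1) * \<bar>d2 k H\<bar>) + real N * \<bar>2 powr (2*H) - 2\<bar>"

definition E1 :: "nat \<Rightarrow> real \<Rightarrow> real" where
  "E1 N H = - ((H - 1/2)^2 / (1 - H)) * F1 N H"

definition E2 :: "nat \<Rightarrow> real \<Rightarrow> real" where
  "E2 N H = - ((H - 1/2)^2 / (1 - H)) * F2 N H"

end

theory Submission
  imports Defs "HOL-Real_Asymp.Real_Asymp"
begin

text \<open>Write a = 2H, so that (H - 1/2)^2/(1 - H) = w(a)/2 with w(a) = (1 - a)^2/(2 - a), which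
  decreases strictly on [0,1] and increases strictly on [1,2). By concavity resp. convexity of
  y \<mapsto> y^a, the second differences \<delta>_k(a) of y^a (with \<delta>_1 = 2^a - 2) are all \<le> 0
  for a \<le> 1 and all \<ge> 0 for a \<ge> 1. Hence the weighted sum F2 telescopes to
  |(N+1)^a - (N+1)|, which is monotone on either side of a = 1, and for a \<ge> 1 every \<delta>_k is
  moreover nondecreasing in a, so F1 is nondecreasing there.

  For a in (0,1) F1 is not monotone; instead the derivative of w F1 is negative, i.e.
  (1 - a)(2 - a) F1' < (3 - a) F1. The a-derivative of \<delta>_k is the second difference of
  y^a ln y, whose second derivative is at least -(1 - a) on y \<ge> 1; after telescoping, the
  k \<ge> 2 part of F1' is at most 2(1 - a)(2^a - 1), and this is dominated by the term
  (2 - 2^a)^2 of F1 because 2^a \<le> 1 + a. Finally w(a) \<rightarrow> \<infinity> as a \<up> 2, while F1 and F2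
  stay bounded below by their k = 1 terms.\<close>

definition second_diff :: "(real \<Rightarrow> real) \<Rightarrow> real \<Rightarrow> real" where
  "second_diff f x = f (x + 1) + f (x - 1) - 2 * f x"

lemma second_diff_nonneg_if_convex:
  assumes "convex_on {x - 1..x + 1} f"
  shows "0 \<le> second_diff f x"
proof -
  have "f ((1 - 1/2) *\<^sub>R (x - 1) + (1/2) *\<^sub>R (x + 1)) \<le> (1 - 1/2) * f (x - 1) + (1/2) * f (x + 1)"
    by (rule convex_onD[OF assms]) auto
  moreover have "(1 - 1/2) *\<^sub>R (x - 1) + (1/2) *\<^sub>R (x + 1) = x"
    by (simp add: field_simps)
  ultimately show ?thesis
    by (simp add: second_diff_def)
qed

lemma second_diff_nonpos_if_concave:
  assumes "concave_on {x - 1..x + 1} f"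
  shows "second_diff f x \<le> 0"
  using second_diff_nonneg_if_convex[of x "\<lambda>y. - f y"] assms
  by (simp add: concave_on_def second_diff_def)

lemma second_diff_add_half_square:
  "second_diff (\<lambda>y. f y + c * y\<^sup>2 / 2) x = second_diff f x + c"
  by (simp add: second_diff_def power2_eq_square field_simps)

lemma second_diff_powr_nonpos:
  assumes "1 < x" "0 \<le> a" "a \<le> 1"
  shows "second_diff (\<lambda>y. y powr a) x \<le> 0"
proof (rule second_diff_nonpos_if_concave, rule f''_le0_imp_concave)
  fix y assume "y \<in> {x - 1..x + 1}"
  then have "0 < y" using assms by auto
  then show "((\<lambda>y. y powr a) has_real_derivative a * y powr (a - 1)) (at y)"
    and "((\<lambda>y. a * y powr (a - 1)) has_real_derivative a * ((a - 1) * y powr (a - 1 - 1))) (at y)"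
    by (auto intro!: derivative_eq_intros)
  show "a * ((a - 1) * y powr (a - 1 - 1)) \<le> 0"
    using \<open>0 < y\<close> assms by (intro mult_nonneg_nonpos mult_nonpos_nonneg) auto
qed simp

lemma second_diff_powr_nonneg:
  assumes "1 < x" "1 \<le> a"
  shows "0 \<le> second_diff (\<lambda>y. y powr a) x"
  using assms by (intro second_diff_nonneg_if_convex convex_on_subset[OF powr_convex]) auto

lemma has_real_derivative_second_diff_powr:
  assumes "1 < x"
  shows "((\<lambda>a. second_diff (\<lambda>y. y powr a) x) has_real_derivative
           second_diff (\<lambda>y. y powr a * ln y) x) (at a)"
  using assms unfolding second_diff_def
  by (auto intro!: derivative_eq_intros simp: algebra_simps)

lemma second_diff_powr_ln_ge_if_deriv2_ge:
  assumes "2 \<le> x"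
    \<comment> \<open>the second derivative of y^a ln y\<close>
    and deriv2_ge: "\<And>y. 1 \<le> y \<Longrightarrow> - c \<le> y powr (a - 2) * (a * (a - 1) * ln y + 2 * a - 1)"
  shows "- c \<le> second_diff (\<lambda>y. y powr a * ln y) x"
proof -
  have "0 \<le> second_diff (\<lambda>y. y powr a * ln y + c * y\<^sup>2 / 2) x"
  proof (rule second_diff_nonneg_if_convex, rule f''_ge0_imp_convex)
    fix y assume "y \<in> {x - 1..x + 1}"
    then have "1 \<le> y" using assms by auto
    have powr_shift: "y powr (a - 1) = y powr a / y" "y powr (a - 1 - 1) = y powr a / y\<^sup>2"
      "y powr (a - 2) = y powr a / y\<^sup>2"
      using \<open>1 \<le> y\<close> by (simp_all add: powr_diff power2_eq_square)
    show "((\<lambda>y. y powr a * ln y + c * y\<^sup>2 / 2) has_real_derivative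
        y powr (a - 1) * (a * ln y + 1) + c * y) (at y)"
      and "((\<lambda>y. y powr (a - 1) * (a * ln y + 1) + c * y) has_real_derivative
        y powr (a - 2) * (a * (a - 1) * ln y + 2 * a - 1) + c) (at y)"
      using \<open>1 \<le> y\<close> by (auto intro!: derivative_eq_intros simp: powr_shift field_simps power2_eq_square)
    show "0 \<le> y powr (a - 2) * (a * (a - 1) * ln y + 2 * a - 1) + c"
      using deriv2_ge[OF \<open>1 \<le> y\<close>] by simp
  qed simp
  then show ?thesis
    by (simp add: second_diff_add_half_square)
qed

lemma second_diff_powr_ln_ge:
  assumes "2 \<le> x" "0 \<le> a" "a \<le> 1"
  shows "- (1 - a) \<le> second_diff (\<lambda>y. y powr a * ln y) x"
proof (rule second_diff_powr_ln_ge_if_deriv2_ge[OF \<open>2 \<le> x\<close>])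
  fix y :: real assume "1 \<le> y"
  define P where "P = y powr (a - 2)"
  have "0 < P" "P \<le> 1"
    using \<open>1 \<le> y\<close> assms powr_mono[of "a - 2" 0 y] by (auto simp: P_def)
  have "P \<le> inverse y"
    using \<open>1 \<le> y\<close> assms powr_mono[of "a - 2" "-1" y] by (simp add: P_def powr_minus)
  then have "P * ln y \<le> inverse y * ln y"
    using \<open>1 \<le> y\<close> by (intro mult_right_mono) auto
  also have "\<dots> \<le> 1"
    using \<open>1 \<le> y\<close> ln_le_minus_one[of y] by (simp add: field_simps)
  finally have "a * (1 - a) * (P * ln y) \<le> a * (1 - a)"
    using assms by (intro mult_left_le) auto
  moreover have "min 0 (2 * a - 1) \<le> P * (2 * a - 1)"
    using \<open>0 < P\<close> \<open>P \<le> 1\<close> by (cases "0 \<le> 2 * a - 1") (auto simp: mult_left_le_one_le)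
  moreover have "- (1 - a) \<le> min 0 (2 * a - 1) - a * (1 - a)"
  proof -
    have "a * (1 - a) \<le> 1 - a"
      using assms by (intro mult_left_le_one_le) auto
    then show ?thesis
      using zero_le_square[of a] by (auto simp: min_def algebra_simps)
  qed
  ultimately show "- (1 - a) \<le> P * (a * (a - 1) * ln y + 2 * a - 1)"
    by (simp add: algebra_simps)
qed

lemma second_diff_powr_ln_nonneg:
  assumes "2 \<le> x" "1 \<le> a"
  shows "0 \<le> second_diff (\<lambda>y. y powr a * ln y) x"
proof -
  have "0 \<le> y powr (a - 2) * (a * (a - 1) * ln y + 2 * a - 1)" if "1 \<le> y" for y
  proof -
    have "0 \<le> a * (a - 1) * ln y"
      using that assms by simp
    then show ?thesis
      using assms by simp
  qed
  then show ?thesis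
    using second_diff_powr_ln_ge_if_deriv2_ge[OF \<open>2 \<le> x\<close>, of 0 a] by simp
qed

lemma sum_second_diff:
  assumes "1 \<le> N"
  shows "(\<Sum>k=2..N. second_diff f (real k)) = f (real N + 1) - f (real N) - f 2 + f 1"
  using assms
proof (induction N rule: dec_induct)
  case (step n)
  then show ?case
    by (simp add: second_diff_def algebra_simps)
qed simp

lemma weighted_sum_second_diff:
  "(\<Sum>k=2..N. real (N - k + 1) * second_diff f (real k)) + real N * (f 2 - 2 * f 1)
     = f (real N + 1) - (real N + 1) * f 1"
proof (induction N)
  case (Suc N)
  have "(\<Sum>k=2..Suc N. real (Suc N - k + 1) * second_diff f (real k))
      = (\<Sum>k=2..N. real (N - k + 1) * second_diff f (real k)) + (\<Sum>k=2..Suc N. second_diff f (real k))"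
  proof (cases "N = 0")
    case False
    have "(\<Sum>k=2..N. real (Suc N - k + 1) * second_diff f (real k))
        = (\<Sum>k=2..N. real (N - k + 1) * second_diff f (real k) + second_diff f (real k))"
      by (intro sum.cong) (auto simp: Suc_diff_le algebra_simps)
    then show ?thesis
      using False by (simp add: sum.distrib)
  qed simp
  then show ?case
    using Suc sum_second_diff[of "Suc N" f] by (simp add: algebra_simps)
qed simp

lemma d2_eq_second_diff: "d2 k H = second_diff (\<lambda>y. y powr (2 * H)) (real k)"
  by (simp add: d2_def second_diff_def)

lemma F2_eq_abs:
  assumes "0 \<le> H"
  shows "F2 N H = \<bar>(real N + 1) powr (2 * H) - (real N + 1)\<bar>"
proof -
  have closed_form: "(\<Sum>k=2..N. real (N - k + 1) * d2 k H) + real N * (2 powr (2 * H) - 2)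
      = (real N + 1) powr (2 * H) - (real N + 1)"
    using weighted_sum_second_diff[of N "\<lambda>y. y powr (2 * H)"] by (simp add: d2_eq_second_diff)
  show ?thesis
  proof (cases "2 * H \<le> 1")
    case True
    have "(\<Sum>k=2..N. real (N - k + 1) * \<bar>d2 k H\<bar>) = (\<Sum>k=2..N. - (real (N - k + 1) * d2 k H))"
      using assms True second_diff_powr_nonpos by (intro sum.cong) (simp_all add: d2_eq_second_diff)
    moreover have "\<bar>2 powr (2 * H) - 2\<bar> = - (2 powr (2 * H) - 2)"
      using True powr_mono[of "2 * H" 1 "2::real"] by simp
    ultimately have "F2 N H = - ((\<Sum>k=2..N. real (N - k + 1) * d2 k H) + real N * (2 powr (2 * H) - 2))"
      unfolding F2_def sum_negf by (simp add: right_diff_distrib)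
    moreover have "(real N + 1) powr (2 * H) \<le> real N + 1"
      using True powr_mono[of "2 * H" 1 "real N + 1"] by simp
    ultimately show ?thesis
      using closed_form by linarith
  next
    case False
    have "\<bar>d2 k H\<bar> = d2 k H" if "k \<in> {2..N}" for k
      using that False second_diff_powr_nonneg[of "real k" "2 * H"] by (simp add: d2_eq_second_diff)
    moreover have "\<bar>2 powr (2 * H) - 2\<bar> = 2 powr (2 * H) - 2"
      using False powr_mono[of 1 "2 * H" "2::real"] by simp
    moreover have "real N + 1 \<le> (real N + 1) powr (2 * H)"
      using False powr_mono[of 1 "2 * H" "real N + 1"] by simp
    ultimately show ?thesis
      using closed_form by (simp add: F2_def)
  qed
qed

definition weight :: "real \<Rightarrow> real" where
  "weight a = (1 - a)\<^sup>2 / (2 - a)"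

lemma half_weight_double: "(H - 1/2)\<^sup>2 / (1 - H) = weight (2 * H) / 2"
proof (cases "H = 1")
  case False
  then have "1 - H \<noteq> 0" "2 - 2 * H \<noteq> 0"
    by auto
  then show ?thesis
    by (simp add: weight_def field_simps power2_eq_square)
qed (simp add: weight_def)

lemma weight_nonneg: "a < 2 \<Longrightarrow> 0 \<le> weight a"
  by (simp add: weight_def)

lemma has_real_derivative_weight:
  "a < 2 \<Longrightarrow> (weight has_real_derivative (1 - a) * (a - 3) / (2 - a)\<^sup>2) (at a)"
  unfolding weight_def[abs_def]
  by (auto intro!: derivative_eq_intros simp: field_simps power2_eq_square)

lemma weight_decreasing:
  assumes "0 \<le> a1" "a1 < a2" "a2 \<le> 1"
  shows "weight a2 < weight a1"
proof (rule DERIV_neg_imp_decreasing_open[OF \<open>a1 < a2\<close>])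
  fix x assume "a1 < x" "x < a2"
  then show "\<exists>y. (weight has_real_derivative y) (at x) \<and> y < 0"
    using assms has_real_derivative_weight[of x] by (auto intro!: divide_neg_pos mult_pos_neg)
next
  show "continuous_on {a1..a2} weight"
    using assms has_real_derivative_weight
    by (intro DERIV_atLeastAtMost_imp_continuous_on) force
qed

lemma weight_increasing:
  assumes "1 \<le> a1" "a1 < a2" "a2 < 2"
  shows "weight a1 < weight a2"
proof -
  have "weight a1 = (a1 - 1)\<^sup>2 / (2 - a1)"
    by (simp add: weight_def power2_commute)
  also have "\<dots> \<le> (a1 - 1)\<^sup>2 / (2 - a2)"
    using assms by (intro divide_left_mono) auto
  also have "\<dots> < (a2 - 1)\<^sup>2 / (2 - a2)"
    using assms by (intro divide_strict_right_mono power_strict_mono) auto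
  also have "\<dots> = weight a2"
    by (simp add: weight_def power2_commute)
  finally show ?thesis .
qed

lemma weight_mult_dist_powr_decreasing:
  fixes b :: real
  assumes "1 < b" "0 \<le> a1" "a1 < a2" "a2 \<le> 1"
  shows "weight a2 * \<bar>b powr a2 - b\<bar> < weight a1 * \<bar>b powr a1 - b\<bar>"
proof -
  have "b powr a1 \<le> b powr a2" "b powr a2 \<le> b" "b powr a1 < b"
    using assms powr_mono[of a1 a2 b] powr_mono[of a2 1 b] powr_less_mono[of a1 1 b] by auto
  then have "weight a2 * \<bar>b powr a2 - b\<bar> \<le> weight a2 * \<bar>b powr a1 - b\<bar>"
    using assms weight_nonneg[of a2] by (auto intro!: mult_left_mono)
  also have "\<dots> < weight a1 * \<bar>b powr a1 - b\<bar>"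
    using weight_decreasing[OF assms(2-4)] \<open>b powr a1 < b\<close> by (intro mult_strict_right_mono) auto
  finally show ?thesis .
qed

lemma weight_mult_dist_powr_increasing:
  fixes b :: real
  assumes "1 < b" "1 \<le> a1" "a1 < a2" "a2 < 2"
  shows "weight a1 * \<bar>b powr a1 - b\<bar> < weight a2 * \<bar>b powr a2 - b\<bar>"
proof -
  have "b powr a1 \<le> b powr a2" "b \<le> b powr a1" "b < b powr a2"
    using assms powr_mono[of a1 a2 b] powr_mono[of 1 a1 b] powr_less_mono[of 1 a2 b] by auto
  then have "weight a1 * \<bar>b powr a1 - b\<bar> \<le> weight a1 * \<bar>b powr a2 - b\<bar>"
    using assms weight_nonneg[of a1] by (auto intro!: mult_left_mono)
  also have "\<dots> < weight a2 * \<bar>b powr a2 - b\<bar>"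
    using weight_increasing[OF assms(2-4)] \<open>b < b powr a2\<close> by (intro mult_strict_right_mono) auto
  finally show ?thesis .
qed

definition sum_sq_second_diffs :: "nat \<Rightarrow> real \<Rightarrow> real" where
  "sum_sq_second_diffs N a =
     (\<Sum>k=2..N. (second_diff (\<lambda>y. y powr a) (real k))\<^sup>2) + (2 powr a - 2)\<^sup>2"

definition sum_sq_second_diffs_deriv :: "nat \<Rightarrow> real \<Rightarrow> real" where
  "sum_sq_second_diffs_deriv N a =
     (\<Sum>k=2..N. 2 * second_diff (\<lambda>y. y powr a) (real k) * second_diff (\<lambda>y. y powr a * ln y) (real k))
     + 2 * (2 powr a - 2) * (ln 2 * 2 powr a)"

lemma F1_eq_sum_sq_second_diffs: "F1 N H = sum_sq_second_diffs N (2 * H)"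
  by (simp add: F1_def sum_sq_second_diffs_def d2_eq_second_diff)

lemma has_real_derivative_sum_sq_second_diffs:
  "(sum_sq_second_diffs N has_real_derivative sum_sq_second_diffs_deriv N a) (at a)"
  unfolding sum_sq_second_diffs_def[abs_def] sum_sq_second_diffs_deriv_def
  by (auto intro!: derivative_eq_intros has_real_derivative_second_diff_powr simp: algebra_simps)

lemma two_powr_le_one_plus:
  fixes a :: real
  assumes "0 \<le> a" "a \<le> 1"
  shows "2 powr a \<le> 1 + a"
proof -
  have "convex_on UNIV (\<lambda>x::real. 2 powr x)"
    by (intro convex_on_realI[where f' = "\<lambda>x. ln 2 * 2 powr x"])
       (auto intro!: derivative_eq_intros simp: mono_def)
  from convex_onD[OF this, of a 0 1] assms show ?thesis
    by simp
qed

lemma sum_second_diff_powr_mult_deriv_le: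
  assumes "1 \<le> N" "0 \<le> a" "a \<le> 1"
  shows "(\<Sum>k=2..N. second_diff (\<lambda>y. y powr a) (real k) * second_diff (\<lambda>y. y powr a * ln y) (real k))
    \<le> (1 - a) * (2 powr a - 1)"
proof -
  have "second_diff (\<lambda>y. y powr a) (real k) * second_diff (\<lambda>y. y powr a * ln y) (real k)
      \<le> (1 - a) * - second_diff (\<lambda>y. y powr a) (real k)" if "k \<in> {2..N}" for k
    using mult_left_mono_neg[OF second_diff_powr_ln_ge second_diff_powr_nonpos, of "real k" a] that assms
    by (simp add: algebra_simps)
  then have "(\<Sum>k=2..N. second_diff (\<lambda>y. y powr a) (real k) * second_diff (\<lambda>y. y powr a * ln y) (real k))
      \<le> (\<Sum>k=2..N. (1 - a) * - second_diff (\<lambda>y. y powr a) (real k))"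
    by (rule sum_mono)
  also have "\<dots> = (1 - a) * - (\<Sum>k=2..N. second_diff (\<lambda>y. y powr a) (real k))"
    by (simp add: sum_distrib_left sum_negf)
  also have "\<dots> = (1 - a) * (2 powr a - 1 - ((real N + 1) powr a - real N powr a))"
    using sum_second_diff[OF \<open>1 \<le> N\<close>, of "\<lambda>y. y powr a"] by simp
  also have "\<dots> \<le> (1 - a) * (2 powr a - 1)"
    using assms powr_mono2[of a "real N" "real N + 1"] by (intro mult_left_mono) auto
  finally show ?thesis .
qed

lemma sum_sq_second_diffs_deriv_le:
  assumes "1 \<le> N" "0 \<le> a" "a \<le> 1"
  shows "sum_sq_second_diffs_deriv N a \<le> 2 * (1 - a) * a"
proof -
  define t where "t = (2::real) powr a"
  have t: "1 \<le> t" "t \<le> 1 + a"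
    using assms two_powr_le_one_plus[of a] ge_one_powr_ge_zero[of 2 a] by (auto simp: t_def)
  have "sum_sq_second_diffs_deriv N a = 2 * (\<Sum>k=2..N. second_diff (\<lambda>y. y powr a) (real k)
      * second_diff (\<lambda>y. y powr a * ln y) (real k)) + 2 * ((t - 2) * (ln 2 * t))"
    by (simp add: sum_sq_second_diffs_deriv_def t_def sum_distrib_left mult.assoc)
  moreover have "(t - 2) * (ln 2 * t) \<le> 0"
    using assms t by (intro mult_nonpos_nonneg) auto
  ultimately have "sum_sq_second_diffs_deriv N a \<le> 2 * ((1 - a) * (t - 1))"
    using sum_second_diff_powr_mult_deriv_le[OF assms] unfolding t_def by linarith
  also have "\<dots> \<le> 2 * (1 - a) * a"
    unfolding mult.assoc using assms t by (intro mult_left_mono) auto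
  finally show ?thesis .
qed

lemma sum_sq_second_diffs_deriv_bound:
  assumes "1 \<le> N" "0 < a" "a < 1"
  shows "(1 - a) * (2 - a) * sum_sq_second_diffs_deriv N a < (3 - a) * sum_sq_second_diffs N a"
proof -
  have "(1 - a) * (2 - a) * sum_sq_second_diffs_deriv N a \<le> (1 - a) * (2 - a) * (2 * (1 - a) * a)"
    using assms sum_sq_second_diffs_deriv_le[of N a] by (intro mult_left_mono) auto
  also have "\<dots> = (1 - a)\<^sup>2 * (2 * (2 - a) * a)"
    by (simp add: power2_eq_square algebra_simps)
  also have "\<dots> < (1 - a)\<^sup>2 * (3 - a)"
  proof -
    have "0 < (1 - a) * (3 - 2 * a)"
      using assms by simp
    then have "2 * (2 - a) * a < 3 - a"
      by (simp add: algebra_simps)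
    then show ?thesis
      using assms by (intro mult_strict_left_mono) auto
  qed
  also have "\<dots> \<le> (2 - 2 powr a)\<^sup>2 * (3 - a)"
    using assms two_powr_le_one_plus[of a] ge_one_powr_ge_zero[of 2 a]
    by (intro mult_right_mono power_mono) auto
  also have "\<dots> \<le> (3 - a) * sum_sq_second_diffs N a"
    using assms by (auto simp: sum_sq_second_diffs_def power2_commute intro!: sum_nonneg)
  finally show ?thesis .
qed

lemma weight_mult_sum_sq_second_diffs_decreasing:
  assumes "1 \<le> N" "0 \<le> a1" "a1 < a2" "a2 \<le> 1"
  shows "weight a2 * sum_sq_second_diffs N a2 < weight a1 * sum_sq_second_diffs N a1"
proof (rule DERIV_neg_imp_decreasing_open[OF \<open>a1 < a2\<close>])
  have deriv: "((\<lambda>a. weight a * sum_sq_second_diffs N a) has_real_derivative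
      (1 - x) * (x - 3) / (2 - x)\<^sup>2 * sum_sq_second_diffs N x
      + sum_sq_second_diffs_deriv N x * weight x) (at x)" if "x < 2" for x
    using DERIV_mult[OF has_real_derivative_weight[OF that] has_real_derivative_sum_sq_second_diffs] .
  show "continuous_on {a1..a2} (\<lambda>a. weight a * sum_sq_second_diffs N a)"
    using assms deriv by (intro DERIV_atLeastAtMost_imp_continuous_on) force
  fix x assume "a1 < x" "x < a2"
  then have "0 < x" "x < 1"
    using assms by auto
  define c where "c = (1 - x) / (2 - x)\<^sup>2"
  have "2 - x \<noteq> 0"
    using \<open>x < 1\<close> by simp
  then have factor_c: "(1 - x) * (x - 3) / (2 - x)\<^sup>2 = c * (x - 3)" "weight x = c * ((1 - x) * (2 - x))"
    by (simp_all add: c_def weight_def power2_eq_square)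
  have "(1 - x) * (x - 3) / (2 - x)\<^sup>2 * sum_sq_second_diffs N x
      + sum_sq_second_diffs_deriv N x * weight x
    = c * ((1 - x) * (2 - x) * sum_sq_second_diffs_deriv N x - (3 - x) * sum_sq_second_diffs N x)"
    unfolding factor_c by (simp add: algebra_simps)
  moreover have "\<dots> < 0"
    using \<open>0 < x\<close> \<open>x < 1\<close> sum_sq_second_diffs_deriv_bound[OF \<open>1 \<le> N\<close>]
    by (intro mult_pos_neg) (auto simp: c_def)
  ultimately show "\<exists>y. ((\<lambda>a. weight a * sum_sq_second_diffs N a) has_real_derivative y) (at x) \<and> y < 0"
    using deriv \<open>x < 1\<close> by force
qed

lemma second_diff_powr_mono_exponent:
  assumes "2 \<le> x" "1 \<le> a1" "a1 \<le> a2"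
  shows "second_diff (\<lambda>y. y powr a1) x \<le> second_diff (\<lambda>y. y powr a2) x"
  using assms has_real_derivative_second_diff_powr second_diff_powr_ln_nonneg
  by (intro DERIV_nonneg_imp_nondecreasing[OF \<open>a1 \<le> a2\<close>]) force

lemma weight_mult_sum_sq_second_diffs_increasing:
  assumes "1 \<le> a1" "a1 < a2" "a2 < 2"
  shows "weight a1 * sum_sq_second_diffs N a1 < weight a2 * sum_sq_second_diffs N a2"
proof -
  have "2 \<le> (2::real) powr a1" "(2::real) powr a1 \<le> 2 powr a2" "2 < (2::real) powr a2"
    using assms powr_mono[of 1 a1 2] powr_mono[of a1 a2 2] powr_less_mono[of 1 a2 2] by auto
  then have "sum_sq_second_diffs N a1 \<le> sum_sq_second_diffs N a2"
    unfolding sum_sq_second_diffs_def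
    using assms second_diff_powr_nonneg second_diff_powr_mono_exponent
    by (intro add_mono sum_mono power_mono) auto
  moreover have "0 < sum_sq_second_diffs N a2"
    using \<open>2 < 2 powr a2\<close> by (auto simp: sum_sq_second_diffs_def intro!: add_nonneg_pos sum_nonneg)
  ultimately have "weight a1 * sum_sq_second_diffs N a1 \<le> weight a1 * sum_sq_second_diffs N a2"
    using assms weight_nonneg[of a1] by (intro mult_left_mono) auto
  also have "\<dots> < weight a2 * sum_sq_second_diffs N a2"
    using weight_increasing[OF assms] \<open>0 < sum_sq_second_diffs N a2\<close> by (intro mult_strict_right_mono)
  finally show ?thesis .
qed

lemma E1_eq_weight: "E1 N H = - (weight (2 * H) * sum_sq_second_diffs N (2 * H)) / 2"
  by (simp add: E1_def half_weight_double F1_eq_sum_sq_second_diffs)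

lemma E2_eq_weight:
  "0 \<le> H \<Longrightarrow> E2 N H = - (weight (2 * H) * \<bar>(real N + 1) powr (2 * H) - (real N + 1)\<bar>) / 2"
  by (simp add: E2_def half_weight_double F2_eq_abs)

lemma E1_at_zero: "E1 N 0 = - 1/4"
proof -
  have "d2 k 0 = 0" if "k \<in> {2..N}" for k
    using that by (simp add: d2_def)
  then have "F1 N 0 = 1"
    by (simp add: F1_def)
  then show ?thesis
    by (simp add: E1_def power2_eq_square)
qed

lemma E2_at_zero: "E2 N 0 = - real N / 4"
  by (simp add: E2_eq_weight weight_def)

lemma filterlim_coeff_mult_at_bot:
  fixes F :: "real \<Rightarrow> real"
  assumes "0 < c" "eventually (\<lambda>H. c \<le> F H) (at_left 1)"
  shows "filterlim (\<lambda>H. - ((H - 1/2)\<^sup>2 / (1 - H)) * F H) at_bot (at_left 1)"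
proof (rule filterlim_at_bot_mono)
  show "filterlim (\<lambda>H. c * - ((H - 1/2)\<^sup>2 / (1 - H))) at_bot (at_left 1)"
    by (rule filterlim_tendsto_pos_mult_at_bot[OF tendsto_const \<open>0 < c\<close>]) real_asymp
  show "eventually (\<lambda>H. - ((H - 1/2)\<^sup>2 / (1 - H)) * F H \<le> c * - ((H - 1/2)\<^sup>2 / (1 - H))) (at_left 1)"
    using assms(2) eventually_at_left_real[of 0 "1::real", OF zero_less_one]
  proof eventually_elim
    case (elim H)
    then have "(H - 1/2)\<^sup>2 / (1 - H) * c \<le> (H - 1/2)\<^sup>2 / (1 - H) * F H"
      by (intro mult_left_mono) auto
    then show ?case
      by (simp add: mult.commute)
  qed
qed

lemma eventually_three_lt_two_powr: "eventually (\<lambda>H. 3 < 2 powr (2 * H)) (at_left (1::real))"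
proof -
  have "((\<lambda>H. 2 powr (2 * H)) \<longlongrightarrow> 2 powr (2 * 1)) (at_left (1::real))"
    by (intro tendsto_intros) auto
  then show ?thesis
    by (rule order_tendstoD) simp
qed

lemma E1_at_bot: "filterlim (E1 N) at_bot (at_left 1)"
proof -
  have "1 \<le> F1 N H" if "3 < 2 powr (2 * H)" for H
  proof -
    have "1 * 1 \<le> (2 powr (2 * H) - 2) * (2 powr (2 * H) - 2)"
      using that by (intro mult_mono) auto
    moreover have "0 \<le> (\<Sum>k=2..N. (d2 k H)\<^sup>2)"
      by (simp add: sum_nonneg)
    ultimately show ?thesis
      by (simp add: F1_def power2_eq_square)
  qed
  then show ?thesis
    unfolding E1_def[abs_def]
    by (intro filterlim_coeff_mult_at_bot[of 1] eventually_mono[OF eventually_three_lt_two_powr]) auto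
qed

lemma E2_at_bot:
  assumes "1 \<le> N"
  shows "filterlim (E2 N) at_bot (at_left 1)"
proof -
  have "1 \<le> F2 N H" if "3 < 2 powr (2 * H)" for H
  proof -
    have "1 * 1 \<le> real N * \<bar>2 powr (2 * H) - 2\<bar>"
      using assms that by (intro mult_mono) auto
    moreover have "0 \<le> (\<Sum>k=2..N. real (N - k + 1) * \<bar>d2 k H\<bar>)"
      by (intro sum_nonneg mult_nonneg_nonneg) auto
    ultimately show ?thesis
      by (simp add: F2_def)
  qed
  then show ?thesis
    unfolding E2_def[abs_def]
    by (intro filterlim_coeff_mult_at_bot[of 1] eventually_mono[OF eventually_three_lt_two_powr]) auto
qed

theorem mainTheorem6:
  fixes N :: nat
  assumes "N \<ge> 2"
  shows "(\<forall>H1 H2. 0 \<le> H1 \<and> H1 < H2 \<and> H2 \<le> 1/2 \<longrightarrow> E1 N H1 < E1 N H2)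
       \<and> (\<forall>H1 H2. 1/2 \<le> H1 \<and> H1 < H2 \<and> H2 < 1 \<longrightarrow> E1 N H2 < E1 N H1)
       \<and> E1 N 0 = - 1/4 \<and> E1 N (1/2) = 0
       \<and> filterlim (E1 N) at_bot (at_left 1)
       \<and> (\<forall>H1 H2. 0 \<le> H1 \<and> H1 < H2 \<and> H2 \<le> 1/2 \<longrightarrow> E2 N H1 < E2 N H2)
       \<and> (\<forall>H1 H2. 1/2 \<le> H1 \<and> H1 < H2 \<and> H2 < 1 \<longrightarrow> E2 N H2 < E2 N H1)
       \<and> E2 N 0 = - real N / 4 \<and> E2 N (1/2) = 0
       \<and> filterlim (E2 N) at_bot (at_left 1)"
proof (intro conjI allI impI)
  have "1 \<le> N" "1 < real N + 1"
    using assms by auto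
  show "filterlim (E1 N) at_bot (at_left 1)" "filterlim (E2 N) at_bot (at_left 1)"
    using E1_at_bot E2_at_bot[OF \<open>1 \<le> N\<close>] .
  show "E1 N 0 = - 1/4" "E2 N 0 = - real N / 4"
    by (rule E1_at_zero, rule E2_at_zero)
  show "E1 N (1/2) = 0" "E2 N (1/2) = 0"
    by (simp_all add: E1_def E2_def)
  show "E1 N H1 < E1 N H2" "E2 N H1 < E2 N H2" if "0 \<le> H1 \<and> H1 < H2 \<and> H2 \<le> 1/2" for H1 H2 :: real
    using that weight_mult_sum_sq_second_diffs_decreasing[OF \<open>1 \<le> N\<close>, of "2 * H1" "2 * H2"]
      weight_mult_dist_powr_decreasing[OF \<open>1 < real N + 1\<close>, of "2 * H1" "2 * H2"]
    by (simp_all add: E1_eq_weight E2_eq_weight)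
  show "E1 N H2 < E1 N H1" "E2 N H2 < E2 N H1" if "1/2 \<le> H1 \<and> H1 < H2 \<and> H2 < 1" for H1 H2 :: real
    using that weight_mult_sum_sq_second_diffs_increasing[of "2 * H1" "2 * H2" N]
      weight_mult_dist_powr_increasing[OF \<open>1 < real N + 1\<close>, of "2 * H1" "2 * H2"]
    by (simp_all add: E1_eq_weight E2_eq_weight)
qed

end
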